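(* The MPB rule $M$ satisfies maximal coverage: for every PB instance $I$, every $S\in M(I)$, every $p\in S$ such that $\{j\in N: p\in A_j\}\subseteq\{j\in N:(S\setminus\{p\})\cap A_j\ne\emptyset\}$, and every voter $i\in N$, if $W_M(I)\cap A_i=\emptyset$ then $c(a)>b-c(S\setminus\{p\})$ for all $a\in A_i$.
   Context: A PB instance is $I=\langle N,P,c,b,\mathcal{A}\rangle$ with voters $N=\{1,\dots,n\}$, projects $P$, costs $c:P\to\mathbb{N}$, budget $b\in\mathbb{N}$, and approval sets $A_i\subseteq P$. $c(S)=\sum_{p\in S}c(p)$; $S$ is feasible if $c(S)\le b$; $u_i(S)=c(S\cap A_i)$. The MPB rule $M$ outputs $M(I)$, the set of all feasible $S$ maximizing $\min_{i\in N}u_i(S)$ among feasible sets. $W_M(I)=\{p\in P:\exists S\in M(I),\ p\in S\}$. *)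

theory Defs
  imports Main
begin

definition pb_instance :: "nat \<Rightarrow> 'p set \<Rightarrow> ('p \<Rightarrow> nat) \<Rightarrow> nat \<Rightarrow> (nat \<Rightarrow> 'p set) \<Rightarrow> bool" where
  "pb_instance n P c b A \<longleftrightarrow> finite P \<and> (\<forall>i\<in>{1..n}. A i \<subseteq> P)"

definition cost :: "('p \<Rightarrow> nat) \<Rightarrow> 'p set \<Rightarrow> nat" where
  "cost c S = (\<Sum>p\<in>S. c p)"

definition feasible :: "'p set \<Rightarrow> ('p \<Rightarrow> nat) \<Rightarrow> nat \<Rightarrow> 'p set \<Rightarrow> bool" where
  "feasible P c b S \<longleftrightarrow> S \<subseteq> P \<and> cost c S \<le> b"

definition util :: "('p \<Rightarrow> nat) \<Rightarrow> (nat \<Rightarrow> 'p set) \<Rightarrow> nat \<Rightarrow> 'p set \<Rightarrow> nat" where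
  "util c A i S = cost c (S \<inter> A i)"

definition min_util :: "nat \<Rightarrow> ('p \<Rightarrow> nat) \<Rightarrow> (nat \<Rightarrow> 'p set) \<Rightarrow> 'p set \<Rightarrow> nat" where
  "min_util n c A S = Min ((\<lambda>i. util c A i S) ` {1..n})"

definition MPB :: "nat \<Rightarrow> 'p set \<Rightarrow> ('p \<Rightarrow> nat) \<Rightarrow> nat \<Rightarrow> (nat \<Rightarrow> 'p set) \<Rightarrow> 'p set set" where
  "MPB n P c b A = {S. feasible P c b S \<and>
     (\<forall>T. feasible P c b T \<longrightarrow> min_util n c A T \<le> min_util n c A S)}"

definition W_MPB :: "nat \<Rightarrow> 'p set \<Rightarrow> ('p \<Rightarrow> nat) \<Rightarrow> nat \<Rightarrow> (nat \<Rightarrow> 'p set) \<Rightarrow> 'p set" where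
  "W_MPB n P c b A = {p \<in> P. \<exists>S\<in>MPB n P c b A. p \<in> S}"

end

theory Submission
  imports Defs
begin

text \<open>If no winning project is approved by voter i, then every winning set gives i
  utility 0, so the optimal egalitarian welfare is 0 and every feasible set is optimal.
  In particular every affordable project wins, hence every project approved by i costs
  more than the whole budget b, which is stronger than the claimed bound.\<close>

lemma MPB_subset_W_MPB:
  assumes "S \<in> MPB n P c b A"
  shows "S \<subseteq> W_MPB n P c b A"
  using assms unfolding MPB_def feasible_def W_MPB_def by blast

lemma min_util_eq_0_if_util_eq_0:
  assumes "i \<in> {1..n}" and "util c A i S = 0"
  shows "min_util n c A S = 0"
proof -
  have "min_util n c A S \<le> util c A i S"
    unfolding min_util_def using assms(1) by (intro Min_le) auto
  with assms(2) show ?thesis by simp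
qed

lemma feasible_in_MPB_if_min_util_eq_0:
  assumes "S \<in> MPB n P c b A" and "min_util n c A S = 0" and "feasible P c b T"
  shows "T \<in> MPB n P c b A"
  using assms unfolding MPB_def by auto

lemma budget_less_cost_if_no_winner_approved:
  assumes "S \<in> MPB n P c b A" and "i \<in> {1..n}" and "A i \<subseteq> P"
    and "W_MPB n P c b A \<inter> A i = {}" and "a \<in> A i"
  shows "b < c a"
proof (rule ccontr)
  assume "\<not> b < c a"
  then have "feasible P c b {a}"
    using assms(3,5) unfolding feasible_def cost_def by auto
  moreover have "S \<inter> A i = {}"
    using MPB_subset_W_MPB[OF assms(1)] assms(4) by blast
  then have "util c A i S = 0"
    unfolding util_def cost_def by simp
  then have "min_util n c A S = 0"
    using assms(2) by (rule min_util_eq_0_if_util_eq_0[rotated])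
  ultimately have "{a} \<in> MPB n P c b A"
    by (intro feasible_in_MPB_if_min_util_eq_0[OF assms(1)])
  then have "a \<in> W_MPB n P c b A"
    using MPB_subset_W_MPB by blast
  with assms(4,5) show False by blast
qed

theorem proposition4:
  fixes n :: nat and P :: "'p set" and c :: "'p \<Rightarrow> nat" and b :: nat
    and A :: "nat \<Rightarrow> 'p set" and S :: "'p set" and p :: 'p and i :: nat
  assumes "pb_instance n P c b A"
    and "S \<in> MPB n P c b A"
    and "p \<in> S"
    and "{j \<in> {1..n}. p \<in> A j} \<subseteq> {j \<in> {1..n}. (S - {p}) \<inter> A j \<noteq> {}}"
    and "i \<in> {1..n}"
    and "W_MPB n P c b A \<inter> A i = {}"
  shows "\<forall>a\<in>A i. int (c a) > int b - int (cost c (S - {p}))"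
proof
  fix a assume "a \<in> A i"
  have "A i \<subseteq> P"
    using assms(1,5) unfolding pb_instance_def by blast
  then have "b < c a"
    by (rule budget_less_cost_if_no_winner_approved[OF assms(2,5) _ assms(6) \<open>a \<in> A i\<close>])
  then show "int (c a) > int b - int (cost c (S - {p}))" by simp
qed

end
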